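(* Suppose the rate $\lambda$ of the Poisson arrival process satisfies $$\limsup_{T\to\infty}\frac1T\int_{-T}^0\lambda(x)\,dx<1,$$ and the service-time process $\mathcal{T}=(\eta_i)_{i\in\mathbb{Z}}$ is stationary and shift-ergodic with $\mathbb{E}(\eta_i)=1$. Then $\mathcal{S}(\bar\Omega)=1$, i.e. for $\mathcal{S}$-almost every $\omega$, the configuration $\theta_t\omega$ lies in $\tilde\Omega$ (so that the conflict resolution operator $\bar R(\theta_t\omega)$ is defined) for all $t\in\mathbb{R}$.
   Context: Single-server FIFO queue. Arrivals form a Poisson point process $\mathcal{P}_\lambda$ on $\mathbb{R}$ with continuous positive rate $\lambda$ satisfying $\int_{-\infty}^0\lambda=\int_0^\infty\lambda=\infty$, viewed as a sequence $\ldots<z_{-1}<z_0<z_1<\ldots$ with $z_0$ the smallest positive point. Service times $\eta_i>0$ form the process $\mathcal{T}$, independent of $\mathcal{P}_\lambda$; $\mathcal{S}=\mathcal{P}_\lambda\times\mathcal{T}$ on $\Omega=\{\omega=(\ldots,(z_i,\eta_i),\ldots)\}$. Nonlinear shift: $\theta_t(x)$ is the unique value with $\int_x^{\theta_t(x)}\lambda(y)\,dy=t$; $\theta_t\omega=(\ldots,(\theta_t(z_i),\eta_i),\ldots)$, with $z_0$ relabeled as the smallest positive point. Conflict resolution: let $I(\omega)$ be the set of indices $i$ with $z_i\ge z_{i-k}+\eta_{i-k}$ for all $k>0$. If $I(\omega)=\{\ldots<i_{-1}<i_0<i_1<\ldots\}$ is doubly infinite, define $R\omega$ by $Rz_j=z_j$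 for $j\in I(\omega)$ and $Rz_j=z_{i_k}+\eta_{i_k}+\cdots+\eta_{j-1}$ for $i_k<j<i_{k+1}$; $\bar R$ denotes the pointwise limit of $R^n$ when all $R^n\omega$ are defined and each $R^nz_j$ is eventually constant. $\tilde\Omega$ is the set of $\omega$ violating only finitely many of the conditions $\sum_{i=-k}^{-1}\eta_i+z_{-k}<0$, $k=1,2,\ldots$ (for such $\omega$, $\bar R\omega$ is defined), and $\bar\Omega=\bigcap_{t\in\mathbb{R}}\theta_t\tilde\Omega$. *)

theory Defs
  imports "HOL-Probability.Probability"
begin

text \<open>Configurations: \<omega> = (z, \<eta>) with z, \<eta> :: int \<Rightarrow> real; z i is the i-th arrival
  point (z 0 the smallest positive point) and \<eta> i its service time.\<close>

definition poisson_prob :: "real \<Rightarrow> nat \<Rightarrow> real" where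
  "poisson_prob mu n = mu ^ n / fact n * exp (- mu)"

definition npts :: "(int \<Rightarrow> real) \<Rightarrow> real set \<Rightarrow> nat" where
  "npts z A = card {i. z i \<in> A}"

definition poisson_process :: "(real \<Rightarrow> real) \<Rightarrow> (int \<Rightarrow> real) measure \<Rightarrow> bool" where
  "poisson_process lam P \<longleftrightarrow>
     prob_space P \<and> sets P = sets (PiM UNIV (\<lambda>_::int. borel)) \<and>
     (AE z in P. strict_mono z \<and> z (-1) \<le> 0 \<and> 0 < z 0) \<and>
     (\<forall>(m::nat) (A :: nat \<Rightarrow> real set) (n :: nat \<Rightarrow> nat).
        (\<forall>j<m. A j \<in> sets borel \<and> bounded (A j)) \<and> disjoint_family_on A {..<m} \<longrightarrow>
        measure P {z. \<forall>j<m. finite {i. z i \<in> A j} \<and> npts z (A j) = n j}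
          = (\<Prod>j<m. poisson_prob (LINT x:A j|lborel. lam x) (n j)))"

definition seq_shift :: "(int \<Rightarrow> real) \<Rightarrow> int \<Rightarrow> real" where
  "seq_shift \<eta> = (\<lambda>i. \<eta> (i + 1))"

definition stationary_ergodic_service :: "(int \<Rightarrow> real) measure \<Rightarrow> bool" where
  "stationary_ergodic_service Q \<longleftrightarrow>
     prob_space Q \<and> sets Q = sets (PiM UNIV (\<lambda>_::int. borel)) \<and>
     (AE \<eta> in Q. \<forall>i. 0 < \<eta> i) \<and>
     distr Q (PiM UNIV (\<lambda>_::int. borel)) seq_shift = Q \<and>
     (\<forall>A \<in> sets Q. seq_shift -` A \<inter> space Q = A \<longrightarrow> measure Q A = 0 \<or> measure Q A = 1)"

definition theta :: "(real \<Rightarrow> real) \<Rightarrow> real \<Rightarrow> real \<Rightarrow> real" where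
  "theta lam t x = (THE y. (LBINT s=x..y. lam s) = t)"

definition theta_conf :: "(real \<Rightarrow> real) \<Rightarrow> real \<Rightarrow> (int \<Rightarrow> real) \<times> (int \<Rightarrow> real)
    \<Rightarrow> (int \<Rightarrow> real) \<times> (int \<Rightarrow> real)" where
  "theta_conf lam t \<omega> =
     (let z = fst \<omega>; \<eta> = snd \<omega>;
          k = (THE k. theta lam t (z (k - 1)) \<le> 0 \<and> 0 < theta lam t (z k))
      in (\<lambda>j. theta lam t (z (j + k)), \<lambda>j. \<eta> (j + k)))"

definition Omega_tilde :: "((int \<Rightarrow> real) \<times> (int \<Rightarrow> real)) set" where
  "Omega_tilde = {(z, \<eta>). finite {k::nat. 1 \<le> k \<and>
       \<not> ((\<Sum>i\<in>{- int k .. -1}. \<eta> i) + z (- int k) < 0)}}"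

end

theory Submission
  imports Defs
begin

text \<open>Let \<open>\<Lambda> x = \<integral>\<^sub>0\<^sup>x \<lambda>\<close>, so that \<open>\<Lambda> (\<theta>\<^sub>t x) = \<Lambda> x + t\<close>. A Chernoff bound and Borel-Cantelli
  show that almost surely \<open>m / r - 3 \<le> -\<Lambda> (z\<^sub>-\<^sub>m)\<close> for all large \<open>m\<close>, for every \<open>r > 1\<close>; a maximal
  inequality together with ergodicity shows that almost surely \<open>\<eta>\<^sub>-\<^sub>1 + \<dots> + \<eta>\<^sub>-\<^sub>k \<le> b k\<close> for all
  large \<open>k\<close>, for every \<open>b > 1\<close>. The density hypothesis gives \<open>-\<Lambda> (-T) \<le> c T\<close> for large \<open>T\<close>
  with some \<open>c < 1\<close>. Choosing \<open>r, b > 1\<close> with \<open>r b c < 1\<close>, the point \<open>\<theta>\<^sub>t z\<^sub>-\<^sub>m\<close> lies below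
  \<open>-(b m + C)\<close> for all large \<open>m\<close>, whatever \<open>t\<close> and \<open>C\<close> are. The constant \<open>C\<close> absorbs the
  finitely many service times moved by the relabelling in \<open>\<theta>\<^sub>t\<close>, so only finitely many of the
  conditions defining \<open>\<Omega>\<close>-tilde fail.\<close>

section \<open>Birkhoff sums of a measure-preserving map\<close>

definition birkhoff_sum :: "('a \<Rightarrow> 'a) \<Rightarrow> ('a \<Rightarrow> real) \<Rightarrow> nat \<Rightarrow> 'a \<Rightarrow> real" where
  "birkhoff_sum T f k x = (\<Sum>j<k. f ((T ^^ j) x))"

lemma birkhoff_sum_Suc: "birkhoff_sum T f (Suc k) x = f x + birkhoff_sum T f k (T x)"
  unfolding birkhoff_sum_def sum.lessThan_Suc_shift by (simp add: funpow_swap1)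

lemma birkhoff_sum_funpow: "birkhoff_sum T f l ((T ^^ j) x) = (\<Sum>i<l. f ((T ^^ (j + i)) x))"
  unfolding birkhoff_sum_def by (simp add: funpow_add add.commute)

lemma measurable_funpow: "T \<in> M \<rightarrow>\<^sub>M M \<Longrightarrow> T ^^ j \<in> M \<rightarrow>\<^sub>M M"
  by (induction j) (auto intro: measurable_compose)

lemma distr_funpow:
  assumes T: "T \<in> M \<rightarrow>\<^sub>M M" and inv: "distr M M T = M"
  shows "distr M M (T ^^ j) = M"
proof (induction j)
  case 0
  then show ?case by (simp add: distr_id2)
next
  case (Suc j)
  have "distr M M (T ^^ Suc j) = distr (distr M M T) M (T ^^ j)"
    unfolding funpow_Suc_right by (rule distr_distr[symmetric]) (use measurable_funpow[OF T] T in auto)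
  also have "\<dots> = M" using Suc inv by simp
  finally show ?case .
qed

lemma integral_birkhoff_sum:
  assumes T: "T \<in> M \<rightarrow>\<^sub>M M" and inv: "distr M M T = M" and g: "integrable M g"
  shows "integrable M (birkhoff_sum T g L)"
    and "integral\<^sup>L M (birkhoff_sum T g L) = real L * integral\<^sup>L M g"
proof -
  have Tj: "T ^^ j \<in> M \<rightarrow>\<^sub>M M" for j by (rule measurable_funpow[OF T])
  have gm: "g \<in> borel_measurable M" using g by blast
  have gj: "integrable M (\<lambda>x. g ((T ^^ j) x))" for j
  proof -
    have "integrable (distr M M (T ^^ j)) g" using g by (simp add: distr_funpow[OF T inv])
    then show ?thesis using integrable_distr_eq[OF Tj gm] by simp
  qed
  have "(\<integral>x. g ((T ^^ j) x) \<partial>M) = integral\<^sup>L M g" for j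
    using integral_distr[OF Tj gm, symmetric] by (simp add: distr_funpow[OF T inv])
  then show "integral\<^sup>L M (birkhoff_sum T g L) = real L * integral\<^sup>L M g"
    unfolding birkhoff_sum_def[abs_def] by (simp add: gj)
  show "integrable M (birkhoff_sum T g L)"
    unfolding birkhoff_sum_def[abs_def] by (simp add: gj)
qed

text \<open>Greedy covering of \<open>[0, L)\<close>: a marked index is paid for by the extra \<open>a\<close>, an unmarked
  one starts a block of length at most \<open>N\<close> whose sum exceeds \<open>a\<close> times its length; only the
  last block can overrun \<open>L\<close>.\<close>
lemma sum_ge_by_blocks:
  fixes h :: "nat \<Rightarrow> real" and a :: real and E :: "nat \<Rightarrow> bool"
  assumes h: "\<And>i. 0 \<le> h i" and a: "0 < a"
    and block: "\<And>j. \<not> E j \<Longrightarrow> \<exists>l\<in>{1..N}. a * real l < (\<Sum>i<l. h (j + i))"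
  shows "a * (real L - real N) \<le> (\<Sum>j<L. h j + (if E j then a else 0))"
proof -
  define g where "g j = h j + (if E j then a else 0)" for j
  have g0: "0 \<le> g j" for j using h a by (simp add: g_def)
  have "a * (real L - real N - real j) \<le> sum g {j..<L}" for j
  proof (induction "L - j" arbitrary: j rule: less_induct)
    case less
    show ?case
    proof (cases "L \<le> j + N")
      case True
      then have "a * (real L - real N - real j) \<le> 0" using a by (simp add: mult_nonneg_nonpos)
      also have "0 \<le> sum g {j..<L}" by (intro sum_nonneg g0)
      finally show ?thesis .
    next
      case False
      show ?thesis
      proof (cases "E j")
        case True
        have "sum g {j..<L} = g j + sum g {Suc j..<L}"
          using False by (intro sum.atLeast_Suc_lessThan) auto
        moreover have "a \<le> g j" using True h by (simp add: g_def)
        moreover have "a * (real L - real N - real (Suc j)) \<le> sum g {Suc j..<L}"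
          using False by (intro less) auto
        ultimately show ?thesis by (simp add: algebra_simps)
      next
        case False': False
        obtain l where l: "1 \<le> l" "l \<le> N" "a * real l < (\<Sum>i<l. h (j + i))"
          using block[OF False'] by auto
        have "sum g {j..<L} = sum g {j..<j + l} + sum g {j + l..<L}"
          using False l by (intro sum.atLeastLessThan_concat[symmetric]) auto
        moreover have "(\<Sum>i<l. h (j + i)) \<le> sum g {j..<j + l}"
          unfolding sum.atLeastLessThan_shift_0[of g j] atLeast0LessThan
          by (simp add: sum_mono g_def a less_imp_le)
        moreover have "a * (real L - real N - real (j + l)) \<le> sum g {j + l..<L}"
          using False l by (intro less) auto
        ultimately show ?thesis using l(3) by (simp add: algebra_simps)
      qed
    qed
  qed
  from this[of 0] show ?thesis by (simp add: g_def atLeast0LessThan)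
qed

lemma birkhoff_sum_ge_by_blocks:
  fixes f :: "'a \<Rightarrow> real" and a :: real
  assumes f0: "\<And>j. 0 \<le> f ((T ^^ j) x)" and a: "0 < a"
    and block: "\<And>j. (T ^^ j) x \<notin> E \<Longrightarrow> \<exists>l\<in>{1..N}. a * real l < birkhoff_sum T f l ((T ^^ j) x)"
  shows "a * (real L - real N) \<le> birkhoff_sum T (\<lambda>y. f y + a * indicator E y) L x"
proof -
  have "a * (real L - real N) \<le> (\<Sum>j<L. f ((T ^^ j) x) + (if (T ^^ j) x \<in> E then a else 0))"
    by (rule sum_ge_by_blocks[OF f0 a]) (use block in \<open>simp add: birkhoff_sum_funpow\<close>)
  also have "\<dots> = birkhoff_sum T (\<lambda>y. f y + a * indicator E y) L x"
    by (auto simp: birkhoff_sum_def indicator_def intro!: sum.cong)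
  finally show ?thesis .
qed

text \<open>If almost every orbit had some average above \<open>a\<close>, the set \<open>E N\<close> of points without
  such an average within \<open>N\<close> steps would have small measure. Charging \<open>a\<close> on \<open>E N\<close> and covering
  orbits by blocks gives \<open>a (L - N) \<le> L (\<integral>f + a P(E N))\<close> for all \<open>L\<close>, which fails for large
  \<open>L\<close> once \<open>a P(E N) < a - \<integral>f\<close>.\<close>
lemma (in prob_space) not_AE_birkhoff_sum_gt:
  assumes T: "T \<in> M \<rightarrow>\<^sub>M M" and inv: "distr M M T = M"
    and f: "integrable M f" and f0: "\<And>x. x \<in> space M \<Longrightarrow> 0 \<le> f x"
    and a: "integral\<^sup>L M f < a"
  shows "\<not> (AE x in M. \<exists>k\<ge>1. a * real k < birkhoff_sum T f k x)"
proof
  assume ae: "AE x in M. \<exists>k\<ge>1. a * real k < birkhoff_sum T f k x"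
  have a0: "0 < a" using a integral_nonneg_AE[of f M] f0 by fastforce
  have [measurable]: "birkhoff_sum T f l \<in> borel_measurable M" for l
    using integral_birkhoff_sum(1)[OF T inv f] by blast
  define E where "E N = {x\<in>space M. \<forall>l\<in>{1..N}. birkhoff_sum T f l x \<le> a * real l}" for N
  have E [measurable]: "E N \<in> sets M" for N unfolding E_def by measurable
  have "AE x in M. x \<notin> (\<Inter>N. E N)"
    using ae by eventually_elim (auto simp: E_def not_le intro: atLeastAtMost_iff[THEN iffD2])
  then have "prob (\<Inter>N. E N) = 0" by (subst prob_eq_0) auto
  moreover have "decseq E" unfolding decseq_def E_def by auto
  ultimately have "(\<lambda>N. prob (E N)) \<longlonglongrightarrow> 0"
    using finite_Lim_measure_decseq[of E] E by (metis image_subset_iff)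
  moreover have "0 < (a - integral\<^sup>L M f) / a" using a a0 by simp
  ultimately obtain N where N: "prob (E N) < (a - integral\<^sup>L M f) / a"
    by (metis eventually_sequentially order_refl order_tendstoD(2))
  define \<delta> where "\<delta> = a - integral\<^sup>L M f - a * prob (E N)"
  have \<delta>: "0 < \<delta>" using N a0 by (simp add: \<delta>_def field_simps)
  define g where "g x = f x + a * indicator (E N) x" for x
  have ind: "integrable M (\<lambda>x. a * indicator (E N) x :: real)"
    using E by (intro integrable_mult_right integrable_real_indicator) (auto simp: less_top[symmetric])
  have g: "integrable M g" unfolding g_def using f ind by simp
  have int_g: "integral\<^sup>L M g = integral\<^sup>L M f + a * prob (E N)"
    unfolding g_def using f ind E by simp
  have "a * (real L - real N) \<le> birkhoff_sum T g L x" if x: "x \<in> space M" for x L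
  proof -
    have Tj: "(T ^^ j) x \<in> space M" for j using measurable_space[OF measurable_funpow[OF T] x] .
    show ?thesis unfolding g_def
      by (rule birkhoff_sum_ge_by_blocks[where f = f and T = T and x = x, OF f0[OF Tj] a0])
        (use Tj in \<open>auto simp: E_def not_le\<close>)
  qed
  then have "a * (real L - real N) \<le> integral\<^sup>L M (birkhoff_sum T g L)" for L
    using integral_mono[OF integrable_const integral_birkhoff_sum(1)[OF T inv g]] by (simp add: prob_space)
  then have bound: "real L * \<delta> \<le> a * real N" for L
    using integral_birkhoff_sum(2)[OF T inv g] by (simp add: int_g \<delta>_def algebra_simps)
  obtain L :: nat where "a * real N / \<delta> < real L" using reals_Archimedean2 by blast
  then have "a * real N < real L * \<delta>" using \<delta> by (simp add: divide_less_eq)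
  with bound[of L] show False by linarith
qed

lemma frequently_sequentially_Suc:
  "(\<exists>\<^sub>F i in sequentially. P (Suc i)) \<longleftrightarrow> (\<exists>\<^sub>F i in sequentially. P i)"
  unfolding frequently_def using eventually_sequentially_Suc[of "\<lambda>i. \<not> P i"] by simp

lemma
  fixes c c' :: real
  assumes "0 \<le> f x" "c' < c"
  shows frequently_birkhoff_sum_gt_of_shift:
      "(\<exists>\<^sub>F k in sequentially. c * real k < birkhoff_sum T f k (T x))
        \<Longrightarrow> (\<exists>\<^sub>F k in sequentially. c' * real k < birkhoff_sum T f k x)"
    and frequently_birkhoff_sum_gt_imp_shift:
      "(\<exists>\<^sub>F k in sequentially. c * real k < birkhoff_sum T f k x)
        \<Longrightarrow> (\<exists>\<^sub>F k in sequentially. c' * real k < birkhoff_sum T f k (T x))"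
proof -
  have "filterlim (\<lambda>k. (c - c') * real k) at_top sequentially"
    using assms(2) by (intro filterlim_tendsto_pos_mult_at_top[OF tendsto_const _ filterlim_real_sequentially]) simp
  then have slack: "\<forall>\<^sub>F k in sequentially. d \<le> (c - c') * real k" for d
    by (simp add: filterlim_at_top)
  show "\<exists>\<^sub>F k in sequentially. c' * real k < birkhoff_sum T f k x"
    if "\<exists>\<^sub>F k in sequentially. c * real k < birkhoff_sum T f k (T x)"
  proof -
    have "\<exists>\<^sub>F k in sequentially. c' * real (Suc k) < birkhoff_sum T f (Suc k) x"
      using frequently_eventually_conj[OF that slack[of c']]
      by (rule frequently_elim1) (use assms(1) in \<open>auto simp: birkhoff_sum_Suc algebra_simps\<close>)
    then show ?thesis
      by (rule frequently_sequentially_Suc[where P = "\<lambda>k. c' * real k < birkhoff_sum T f k x", THEN iffD1])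
  qed
  show "\<exists>\<^sub>F k in sequentially. c' * real k < birkhoff_sum T f k (T x)"
    if "\<exists>\<^sub>F k in sequentially. c * real k < birkhoff_sum T f k x"
  proof -
    have "\<exists>\<^sub>F k in sequentially. c * real (Suc k) < birkhoff_sum T f (Suc k) x"
      using that by (rule frequently_sequentially_Suc[where P = "\<lambda>k. c * real k < birkhoff_sum T f k x", THEN iffD2])
    from frequently_eventually_conj[OF this slack[of "f x - c"]]
    show ?thesis
      by (rule frequently_elim1) (auto simp: birkhoff_sum_Suc algebra_simps)
  qed
qed

lemma vimage_frequently_birkhoff_sum_gt:
  fixes c :: "nat \<Rightarrow> real"
  assumes T: "T \<in> M \<rightarrow>\<^sub>M M" and f0: "\<And>x. x \<in> space M \<Longrightarrow> 0 \<le> f x"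
    and c_Suc: "\<And>n. c (Suc n) < c n"
  defines "D \<equiv> {x\<in>space M. \<exists>n. \<exists>\<^sub>F k in sequentially. c n * real k < birkhoff_sum T f k x}"
  shows "T -` D \<inter> space M = D"
proof (intro set_eqI iffI)
  fix x assume x: "x \<in> T -` D \<inter> space M"
  then obtain n where "\<exists>\<^sub>F k in sequentially. c n * real k < birkhoff_sum T f k (T x)"
    by (auto simp: D_def)
  then have "\<exists>\<^sub>F k in sequentially. c (Suc n) * real k < birkhoff_sum T f k x"
    by (rule frequently_birkhoff_sum_gt_of_shift[rotated 2]) (use f0 x c_Suc in auto)
  then show "x \<in> D" using x by (auto simp: D_def)
next
  fix x assume x: "x \<in> D"
  then obtain n where "\<exists>\<^sub>F k in sequentially. c n * real k < birkhoff_sum T f k x"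
    by (auto simp: D_def)
  then have "\<exists>\<^sub>F k in sequentially. c (Suc n) * real k < birkhoff_sum T f k (T x)"
    by (rule frequently_birkhoff_sum_gt_imp_shift[rotated 2]) (use f0 x c_Suc in \<open>auto simp: D_def\<close>)
  then show "x \<in> T -` D \<inter> space M"
    using x measurable_space[OF T] by (auto simp: D_def)
qed

text \<open>The points whose averages exceed \<open>a + 1 / (n + 1)\<close> infinitely often, for some \<open>n\<close>,
  form an invariant set; ergodicity makes it null or conull, and \<open>not_AE_birkhoff_sum_gt\<close>
  excludes conull.\<close>
lemma (in prob_space) AE_eventually_birkhoff_sum_le:
  assumes T: "T \<in> M \<rightarrow>\<^sub>M M" and inv: "distr M M T = M"
    and ergodic: "\<And>A. A \<in> sets M \<Longrightarrow> T -` A \<inter> space M = A \<Longrightarrow> prob A = 0 \<or> prob A = 1"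
    and f: "integrable M f" and f0: "\<And>x. x \<in> space M \<Longrightarrow> 0 \<le> f x"
    and b: "integral\<^sup>L M f < b"
  shows "AE x in M. \<forall>\<^sub>F k in sequentially. birkhoff_sum T f k x \<le> b * real k"
proof -
  define a where "a = (integral\<^sup>L M f + b) / 2"
  define c where "c n = a + 1 / real (Suc n)" for n
  have c_Suc: "c (Suc n) < c n" for n by (simp add: c_def frac_less2)
  have [measurable]: "birkhoff_sum T f k \<in> borel_measurable M" for k
    using integral_birkhoff_sum(1)[OF T inv f] by blast
  define D where
    "D = {x\<in>space M. \<exists>n. \<exists>\<^sub>F k in sequentially. c n * real k < birkhoff_sum T f k x}"
  have "D = {x\<in>space M. \<exists>n. \<forall>K. \<exists>k\<ge>K. c n * real k < birkhoff_sum T f k x}"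
    unfolding D_def frequently_sequentially ..
  also have "\<dots> \<in> sets M" by measurable
  finally have D: "D \<in> sets M" .
  have "T -` D \<inter> space M = D"
    unfolding D_def by (rule vimage_frequently_birkhoff_sum_gt[where f = f and c = c, OF T f0 c_Suc])
  moreover have "prob D \<noteq> 1"
  proof
    assume "prob D = 1"
    then have "AE x in M. x \<in> D" by (rule AE_prob_1)
    then have "AE x in M. \<exists>k\<ge>1. a * real k < birkhoff_sum T f k x"
    proof eventually_elim
      case (elim x)
      then obtain n where "\<forall>K. \<exists>k\<ge>K. c n * real k < birkhoff_sum T f k x"
        by (auto simp: D_def frequently_sequentially)
      then obtain k where "1 \<le> k" "c n * real k < birkhoff_sum T f k x" by blast
      moreover have "a * real k \<le> c n * real k" by (intro mult_right_mono) (auto simp: c_def)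
      ultimately show ?case by (blast intro: order_le_less_trans)
    qed
    moreover have "integral\<^sup>L M f < a" using b by (simp add: a_def)
    ultimately show False using not_AE_birkhoff_sum_gt[OF T inv f f0] by blast
  qed
  ultimately have not_D: "AE x in M. x \<notin> D" using ergodic[OF D] prob_eq_0[OF D] by auto
  obtain n where n: "1 / real (Suc n) < b - a"
  proof -
    have "0 < b - a" using b by (simp add: a_def)
    then show ?thesis using that nat_approx_posE by blast
  qed
  show ?thesis using not_D AE_space
  proof eventually_elim
    case (elim x)
    have bound: "c n * real k \<le> b * real k" for k
      using n by (intro mult_right_mono) (auto simp: c_def)
    have "\<forall>\<^sub>F k in sequentially. birkhoff_sum T f k x \<le> c n * real k"
      using elim by (auto simp: D_def not_frequently not_less)
    then show ?case by (rule eventually_mono) (use bound in \<open>blast intro: order_trans\<close>)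
  qed
qed

section \<open>The integrated arrival rate\<close>

definition Lam :: "(real \<Rightarrow> real) \<Rightarrow> real \<Rightarrow> real" where
  "Lam lam x = (LBINT s=ereal 0..ereal x. lam s)"

locale arrival_rate =
  fixes lam :: "real \<Rightarrow> real"
  assumes lam_cont: "continuous_on UNIV lam"
    and lam_pos: "\<And>x. 0 < lam x"
    and lam_int_neg: "filterlim (\<lambda>T::real. LBINT x=ereal (-T)..0. lam x) at_top at_top"
    and lam_int_pos: "filterlim (\<lambda>T::real. LBINT x=0..ereal T. lam x) at_top at_top"
begin

lemma has_real_derivative_Lam: "(Lam lam has_real_derivative lam x) (at x)"
proof -
  define R where "R = \<bar>x\<bar> + 1"
  have c: "continuous_on {-R..R} lam" using lam_cont by (rule continuous_on_subset) auto
  have d: "((\<lambda>u. LBINT y=ereal 0..ereal u. lam y) has_vector_derivative lam x) (at x within {-R..R})"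
    by (rule interval_integral_FTC2[OF _ _ c]) (auto simp: R_def)
  have i: "x \<in> interior {-R..R}" unfolding interior_atLeastAtMost_real R_def by (simp; linarith)
  show ?thesis
    using d unfolding at_within_interior[OF i] Lam_def[abs_def]
    by (simp add: has_real_derivative_iff_has_vector_derivative)
qed

lemma continuous_on_Lam: "continuous_on UNIV (Lam lam)"
  using has_real_derivative_Lam by (meson DERIV_isCont continuous_at_imp_continuous_on)

lemma Lam_less: "x < y \<Longrightarrow> Lam lam x < Lam lam y"
  by (rule DERIV_pos_imp_increasing[of x y "Lam lam"]) (use has_real_derivative_Lam lam_pos in blast)+

lemma Lam_le_iff: "Lam lam x \<le> Lam lam y \<longleftrightarrow> x \<le> y"
  by (metis Lam_less order_le_less not_le)

lemma interval_integral_eq_Lam_diff: "(LBINT s=ereal x..ereal y. lam s) = Lam lam y - Lam lam x"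
proof (rule interval_integral_FTC_finite)
  show "continuous_on {min x y..max x y} lam" using lam_cont by (rule continuous_on_subset) auto
  show "(Lam lam has_vector_derivative lam u) (at u within {min x y..max x y})" for u
    using has_real_derivative_Lam[of u] by (simp add: has_real_derivative_iff_has_vector_derivative has_vector_derivative_at_within)
qed

lemma Lam_0: "Lam lam 0 = 0"
  unfolding Lam_def by simp

lemma integral_neg_eq_Lam: "(LBINT x=ereal (-T)..0. lam x) = - Lam lam (-T)"
  using interval_integral_eq_Lam_diff[of "-T" 0] by (simp add: Lam_0 zero_ereal_def)

lemma filterlim_uminus_Lam_uminus: "filterlim (\<lambda>T. - Lam lam (-T)) at_top at_top"
  using lam_int_neg by (simp add: integral_neg_eq_Lam)

lemma filterlim_Lam_at_top: "filterlim (\<lambda>T. Lam lam T) at_top at_top"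
  using lam_int_pos by (simp add: Lam_def zero_ereal_def)

lemma Lam_surj: "\<exists>x. Lam lam x = v"
proof -
  obtain T where T: "- Lam lam (-T) \<ge> - v"
    using filterlim_at_top[THEN iffD1, OF filterlim_uminus_Lam_uminus, rule_format, of "-v"]
    by (auto simp: eventually_at_top_linorder)
  obtain T' where T': "Lam lam T' \<ge> v"
    using filterlim_at_top[THEN iffD1, OF filterlim_Lam_at_top, rule_format, of "v"]
    by (auto simp: eventually_at_top_linorder)
  have le: "-T \<le> T'" using T T' Lam_le_iff[of "-T" T'] by linarith
  have T1: "Lam lam (-T) \<le> v" using T by simp
  have "continuous_on {-T..T'} (Lam lam)" using continuous_on_Lam by (rule continuous_on_subset) auto
  then show ?thesis
    using IVT'[of "Lam lam" "-T" v T', OF T1 T' le] by blast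
qed

lemma Lam_theta: "Lam lam (theta lam t x) = Lam lam x + t"
proof -
  obtain y where y: "Lam lam y = Lam lam x + t" using Lam_surj by blast
  have "theta lam t x = y"
    unfolding theta_def
  proof (rule the_equality)
    show "(LBINT s=ereal x..ereal y. lam s) = t" using y interval_integral_eq_Lam_diff by simp
    fix y' assume "(LBINT s=ereal x..ereal y'. lam s) = t"
    then have "Lam lam y' = Lam lam y" using y interval_integral_eq_Lam_diff by simp
    then show "y' = y" by (metis Lam_le_iff order_antisym order_refl)
  qed
  then show ?thesis using y by simp
qed

lemma eventually_neg_Lam_le:
  assumes "Limsup at_top (\<lambda>T::real. ereal ((1 / T) * (LBINT x=ereal (-T)..0. lam x))) < 1"
  obtains c where "0 < c" "c < 1" "\<forall>\<^sub>F T in at_top. - Lam lam (-T) \<le> c * T"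
proof -
  obtain c0 where c0: "Limsup at_top (\<lambda>T::real. ereal ((1 / T) * (LBINT x=ereal (-T)..0. lam x))) < ereal c0"
    "c0 < 1"
    using ereal_dense2[OF assms] by auto
  define c where "c = max c0 (1 / 2)"
  have "Limsup at_top (\<lambda>T::real. ereal ((1 / T) * (LBINT x=ereal (-T)..0. lam x))) < ereal c"
    using c0(1) by (rule less_le_trans) (simp add: c_def)
  then have "\<forall>\<^sub>F T in at_top. (1 / T) * (- Lam lam (-T)) < c"
    by (auto dest: Limsup_lessD simp: integral_neg_eq_Lam)
  then have "\<forall>\<^sub>F T in at_top. - Lam lam (-T) \<le> c * T"
    using eventually_gt_at_top[of 0] by eventually_elim (simp add: field_simps)
  moreover have "0 < c" "c < 1" using c0(2) by (auto simp: c_def)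
  ultimately show ?thesis using that by blast
qed

end

section \<open>Poisson counts and arrival times\<close>

lemma exp_converges_real: "(\<lambda>n. x ^ n / fact n) sums exp (x :: real)"
  using exp_converges[of x] by (simp add: divide_inverse_commute scaleR_conv_of_real)

text \<open>Chernoff bound: compare the tail of the exponential series termwise with \<open>(s \<mu>)\<^sup>j / (j! s\<^sup>K\<^sup>+\<^sup>1)\<close>.\<close>
lemma poisson_upper_tail_le:
  fixes mu s :: real and K :: nat
  assumes mu: "0 < mu" and s: "1 < s"
  shows "1 - (\<Sum>j\<le>K. poisson_prob mu j) \<le> exp (mu * (s - 1)) / s ^ (K + 1)"
proof -
  define a where "a j = mu ^ j / fact j" for j
  define b where "b j = (s * mu) ^ j / fact j / s ^ (K + 1)" for j
  have tail: "(\<lambda>j. a j - (if j \<in> {..K} then a j else 0)) sums (exp mu - (\<Sum>j\<le>K. a j))"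
    unfolding a_def by (intro sums_diff exp_converges_real sums_If_finite_set) simp
  have b: "b sums (exp (s * mu) / s ^ (K + 1))"
    unfolding b_def by (intro sums_divide exp_converges_real)
  have "a j - (if j \<in> {..K} then a j else 0) \<le> b j" for j
  proof (cases "j \<le> K")
    case True
    then show ?thesis using mu s by (simp add: b_def)
  next
    case False
    have "s ^ (K + 1) \<le> s ^ j" using False s by (intro power_increasing) auto
    then have "mu ^ j * s ^ (K + 1) \<le> mu ^ j * s ^ j" using mu by (intro mult_left_mono) auto
    then show ?thesis using False s by (simp add: a_def b_def field_simps power_mult_distrib)
  qed
  then have main: "exp mu - (\<Sum>j\<le>K. a j) \<le> exp (s * mu) / s ^ (K + 1)"
    using tail b by (rule sums_le)
  have "1 - (\<Sum>j\<le>K. poisson_prob mu j) = exp (- mu) * (exp mu - (\<Sum>j\<le>K. a j))"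
    by (simp add: poisson_prob_def a_def sum_distrib_left exp_minus field_simps)
  also have "\<dots> \<le> exp (- mu) * (exp (s * mu) / s ^ (K + 1))"
    by (intro mult_left_mono main) auto
  also have "\<dots> = exp (mu * (s - 1)) / s ^ (K + 1)"
    by (simp add: exp_add[symmetric] algebra_simps)
  finally show ?thesis .
qed

lemma chernoff_exponent_neg:
  fixes r s :: real
  assumes "1 < s" "s < r"
  shows "s - 1 - r * ln s < 0"
proof -
  have "1 - 1 / s \<le> ln s"
    using ln_le_minus_one[of "1 / s"] assms by (simp add: ln_div)
  then have "r * (1 - 1 / s) \<le> r * ln s" using assms by (intro mult_left_mono) auto
  moreover have "s * (s - 1) < r * (s - 1)" using assms by (intro mult_strict_right_mono) auto
  then have "s - 1 < r * (1 - 1 / s)" using assms by (simp add: field_simps)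
  ultimately show ?thesis by linarith
qed

lemma poisson_upper_tail_geometric:
  fixes r :: real
  assumes r: "1 < r"
  obtains q :: real where "0 < q" "q < 1"
    and "\<And>n. 1 - (\<Sum>j\<le>nat \<lfloor>r * real (Suc n)\<rfloor>. poisson_prob (real (Suc n)) j) \<le> q ^ Suc n"
proof
  define s where "s = (1 + r) / 2"
  have s: "1 < s" "s < r" using r by (auto simp: s_def)
  define q where "q = exp (s - 1 - r * ln s)"
  show "0 < q" "q < 1" using chernoff_exponent_neg[OF s] by (auto simp: q_def)
  fix n
  define mu where "mu = real (Suc n)"
  define K where "K = nat \<lfloor>r * mu\<rfloor>"
  have "r * mu \<le> real K + 1" unfolding K_def by linarith
  then have "exp (r * mu * ln s) \<le> exp ((real K + 1) * ln s)"
    using s by (intro exp_mono mult_right_mono) auto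
  also have "\<dots> = s ^ (K + 1)"
  proof -
    have "s powr real (K + 1) = s ^ (K + 1)" using s by (intro powr_realpow) auto
    then show ?thesis using s by (simp add: powr_def algebra_simps)
  qed
  finally have sK: "exp (r * mu * ln s) \<le> s ^ (K + 1)" .
  have "1 - (\<Sum>j\<le>K. poisson_prob mu j) \<le> exp (mu * (s - 1)) / s ^ (K + 1)"
    by (rule poisson_upper_tail_le) (use s in \<open>auto simp: mu_def\<close>)
  also have "\<dots> \<le> exp (mu * (s - 1)) / exp (r * mu * ln s)"
    using s by (intro divide_left_mono sK) auto
  also have "\<dots> = exp (mu * (s - 1 - r * ln s))"
    by (simp add: exp_diff[symmetric] algebra_simps)
  also have "\<dots> = q ^ Suc n"
    unfolding mu_def q_def by (subst exp_of_nat_mult[symmetric]) simp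
  finally show "1 - (\<Sum>j\<le>nat \<lfloor>r * real (Suc n)\<rfloor>. poisson_prob (real (Suc n)) j) \<le> q ^ Suc n"
    unfolding K_def mu_def .
qed

lemma poisson_process_count_prob:
  assumes P: "poisson_process lam P" and A: "A \<in> sets borel" "bounded A"
  shows "measure P {z. finite {i. z i \<in> A} \<and> npts z A = j} = poisson_prob (LINT x:A|lborel. lam x) j"
proof -
  have "\<forall>(m::nat) (A :: nat \<Rightarrow> real set) (n :: nat \<Rightarrow> nat).
        (\<forall>j<m. A j \<in> sets borel \<and> bounded (A j)) \<and> disjoint_family_on A {..<m} \<longrightarrow>
        measure P {z. \<forall>j<m. finite {i. z i \<in> A j} \<and> npts z (A j) = n j}
          = (\<Prod>j<m. poisson_prob (LINT x:A j|lborel. lam x) (n j))"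
    using P by (simp add: poisson_process_def)
  from this[rule_format, of 1 "\<lambda>_. A" "\<lambda>_. j"] show ?thesis
    using A by (simp add: disjoint_family_on_def)
qed

lemma AE_eventually_count_le:
  assumes P: "poisson_process lam P" and r: "1 < r"
    and A: "\<And>n. A n \<in> sets borel" "\<And>n. bounded (A n)"
    and mean: "\<And>n. (LINT x:A n|lborel. lam x) = real (Suc n)"
  shows "AE z in P. \<forall>\<^sub>F n in sequentially.
           finite {i. z i \<in> A n} \<and> npts z (A n) \<le> nat \<lfloor>r * real (Suc n)\<rfloor>"
proof -
  interpret prob_space P using P by (simp add: poisson_process_def)
  define E where "E n j = {z. finite {i. z i \<in> A n} \<and> npts z (A n) = j}" for n j
  have pE: "prob (E n j) = poisson_prob (real (Suc n)) j" for n j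
    unfolding E_def using poisson_process_count_prob[OF P A] mean by simp
  text \<open>The definition of a Poisson process does not require these events to be measurable,
    but a non-measurable set would have measure 0, whereas its Poisson probability is positive.\<close>
  have E: "E n j \<in> events" for n j
  proof (rule ccontr)
    assume "E n j \<notin> events"
    then have "prob (E n j) = 0" by (rule measure_notin_sets)
    then show False using pE by (simp add: poisson_prob_def)
  qed
  define K where "K n = nat \<lfloor>r * real (Suc n)\<rfloor>" for n
  define G where "G n = (\<Union>j\<le>K n. E n j)" for n
  have G: "G n \<in> events" for n unfolding G_def using E by auto
  obtain q :: real where q: "0 < q" "q < 1"
    and tail: "\<And>n. 1 - (\<Sum>j\<le>K n. poisson_prob (real (Suc n)) j) \<le> q ^ Suc n"
    using poisson_upper_tail_geometric[OF r] unfolding K_def by blast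
  have bound: "prob (space P - G n) \<le> q ^ Suc n" for n
  proof -
    have "prob (G n) = (\<Sum>j\<le>K n. prob (E n j))"
      unfolding G_def
    proof (rule measure_finite_Union)
      show "E n ` {..K n} \<subseteq> events" using E by blast
      show "disjoint_family_on (E n) {..K n}" by (auto simp: disjoint_family_on_def E_def)
    qed (simp_all add: emeasure_eq_measure)
    then show ?thesis using prob_compl[OF G, of n] tail[of n] by (simp add: pE)
  qed
  have "summable (\<lambda>n. q ^ Suc n)" using q by simp
  then have "summable (\<lambda>n. prob (space P - G n))"
    by (rule summable_comparison_test') (use bound in auto)
  then have "AE z in P. \<forall>\<^sub>F n in sequentially. z \<in> space P - (space P - G n)"
    by (intro borel_cantelli_AE1) (use G in \<open>auto simp: less_top[symmetric]\<close>)
  then show ?thesis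
  proof eventually_elim
    case (elim z)
    then show ?case by (rule eventually_mono) (auto simp: G_def E_def K_def)
  qed
qed

lemma strict_mono_le_of_npts_le:
  fixes z :: "int \<Rightarrow> real"
  assumes z: "strict_mono z" "z (-1) \<le> 0"
    and count: "finite {i. z i \<in> {y<..<0}}" "npts z {y<..<0} \<le> m - 2" and m: "2 \<le> m"
  shows "z (- int m) \<le> y"
proof (rule ccontr)
  assume above: "\<not> z (- int m) \<le> y"
  have "{- int m..-2} \<subseteq> {i. z i \<in> {y<..<0}}"
  proof (intro subsetI CollectI greaterThanLessThan_iff[THEN iffD2] conjI)
    fix i assume "i \<in> {- int m..-2}"
    then have "z (- int m) \<le> z i" "z i < z (-1)"
      using z(1) by (auto simp: strict_mono_less_eq strict_mono_less)
    then show "y < z i" "z i < 0" using above z(2) by auto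
  qed
  then have "card {- int m..-2} \<le> npts z {y<..<0}"
    unfolding npts_def using count(1) by (rule card_mono[rotated])
  then show False using count(2) m by simp
qed

context arrival_rate
begin

lemma eventually_Lam_arrival_ge:
  fixes z :: "int \<Rightarrow> real" and y :: "nat \<Rightarrow> real"
  assumes z: "strict_mono z" "z (-1) \<le> 0" and r: "1 < r"
    and y: "\<And>n. Lam lam (y n) = - real (Suc n)"
    and count: "\<forall>\<^sub>F n in sequentially.
      finite {i. z i \<in> {y n<..<0}} \<and> npts z {y n<..<0} \<le> nat \<lfloor>r * real (Suc n)\<rfloor>"
  shows "\<forall>\<^sub>F m in sequentially. real m / r - 3 \<le> - Lam lam (z (- int m))"
proof -
  obtain n0 where n0: "\<And>n. n0 \<le> n \<Longrightarrow>
      finite {i. z i \<in> {y n<..<0}} \<and> npts z {y n<..<0} \<le> nat \<lfloor>r * real (Suc n)\<rfloor>"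
    using count by (auto simp: eventually_sequentially)
  have "real m / r - 3 \<le> - Lam lam (z (- int m))" if m: "r * (real n0 + 1) + 2 \<le> real m" for m
  proof -
    have "0 \<le> r * (real n0 + 1)" using r by simp
    then have m2: "2 \<le> m" using m by linarith
    define F where "F = \<lfloor>(real m - 2) / r\<rfloor>"
    have "real n0 + 1 \<le> (real m - 2) / r" using m r by (simp add: field_simps)
    then have F1: "int n0 + 1 \<le> F" unfolding F_def by (simp add: le_floor_iff)
    define n where "n = nat F - 1"
    have Sn: "real (Suc n) = real_of_int F" using F1 by (simp add: n_def)
    have "r * real_of_int F \<le> real m - 2"
      using r mult_left_mono[of "real_of_int F" "(real m - 2) / r" r] unfolding F_def by simp
    then have "\<lfloor>r * real (Suc n)\<rfloor> \<le> int m - 2" using Sn by (simp add: floor_le_iff)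
    then have K: "nat \<lfloor>r * real (Suc n)\<rfloor> \<le> m - 2" using m2 by linarith
    have "n0 \<le> n" using F1 by (simp add: n_def)
    then have count_n: "finite {i. z i \<in> {y n<..<0}}" "npts z {y n<..<0} \<le> m - 2"
      using n0 K order_trans by blast+
    have "z (- int m) \<le> y n" using z count_n m2 by (rule strict_mono_le_of_npts_le)
    then have "Lam lam (z (- int m)) \<le> Lam lam (y n)" by (simp add: Lam_le_iff)
    then have "real_of_int F \<le> - Lam lam (z (- int m))" using y[of n] Sn by linarith
    moreover have "(real m - 2) / r - 1 \<le> real_of_int F" unfolding F_def by linarith
    moreover have "real m / r - 3 \<le> (real m - 2) / r - 1"
      using r by (simp add: field_simps)
    ultimately show ?thesis by linarith
  qed
  moreover obtain M :: nat where "r * (real n0 + 1) + 2 \<le> real M" using real_arch_simple by blast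
  ultimately show ?thesis
    unfolding eventually_sequentially by (meson of_nat_le_iff order_trans)
qed

lemma AE_eventually_Lam_arrival_ge:
  assumes P: "poisson_process lam P" and r: "1 < r"
  shows "AE z in P. \<forall>\<^sub>F m in sequentially. real m / r - 3 \<le> - Lam lam (z (- int m))"
proof -
  define y where "y n = (SOME y. Lam lam y = - real (Suc n))" for n
  have y: "Lam lam (y n) = - real (Suc n)" for n
    unfolding y_def using Lam_surj by (rule someI_ex)
  have y0: "y n < 0" for n
    using Lam_le_iff[of 0 "y n"] y[of n] by (simp add: Lam_0)
  have "(LINT x:{y n<..<0}|lborel. lam x) = real (Suc n)" for n
    using interval_integral_eq_Lam_diff[of "y n" 0] y0[of n] y[of n]
    by (simp add: interval_lebesgue_integral_le_eq Lam_0 zero_ereal_def)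
  then have "AE z in P. \<forall>\<^sub>F n in sequentially.
      finite {i. z i \<in> {y n<..<0}} \<and> npts z {y n<..<0} \<le> nat \<lfloor>r * real (Suc n)\<rfloor>"
    by (intro AE_eventually_count_le[OF P r]) auto
  moreover have "AE z in P. strict_mono z \<and> z (-1) \<le> 0"
    using P by (auto simp: poisson_process_def elim: AE_mp)
  ultimately show ?thesis
    by eventually_elim (rule eventually_Lam_arrival_ge[OF _ _ r y]; simp)
qed

end

section \<open>Sums of service times\<close>

lemma measurable_index_shift:
  "(\<lambda>\<eta> i. \<eta> (i + d)) \<in> PiM UNIV (\<lambda>_::int. borel) \<rightarrow>\<^sub>M PiM UNIV (\<lambda>_::int. borel :: real measure)"
  by (rule measurable_PiM_single') (auto simp: space_PiM)

lemma funpow_backward_shift: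
  "((\<lambda>\<eta> :: int \<Rightarrow> real. \<lambda>i. \<eta> (i - 1)) ^^ j) \<eta> = (\<lambda>i. \<eta> (i - int j))"
  by (induction j arbitrary: \<eta>) (auto simp: algebra_simps)

text \<open>The sums in the definition of \<^const>\<open>Omega_tilde\<close> run over \<open>\<eta>\<^sub>-\<^sub>1, \<eta>\<^sub>-\<^sub>2, \<dots>\<close>, so they are
  Birkhoff sums of the inverse of \<^const>\<open>seq_shift\<close>, which inherits stationarity and ergodicity.\<close>
lemma stationary_ergodic_service_backward_shift:
  fixes Q :: "(int \<Rightarrow> real) measure"
  assumes Q: "stationary_ergodic_service Q"
  defines "R \<equiv> \<lambda>\<eta> :: int \<Rightarrow> real. \<lambda>i. \<eta> (i - 1)"
  shows "R \<in> Q \<rightarrow>\<^sub>M Q" and "distr Q Q R = Q"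
    and "\<And>A. A \<in> sets Q \<Longrightarrow> R -` A \<inter> space Q = A \<Longrightarrow> measure Q A = 0 \<or> measure Q A = 1"
proof -
  let ?PI = "PiM UNIV (\<lambda>_::int. borel :: real measure)"
  have sets_Q: "sets Q = sets ?PI" and stat: "distr Q ?PI seq_shift = Q"
    and erg: "\<And>A. A \<in> sets Q \<Longrightarrow> seq_shift -` A \<inter> space Q = A \<Longrightarrow> measure Q A = 0 \<or> measure Q A = 1"
    using Q unfolding stationary_ergodic_service_def by auto
  have space_Q: "space Q = UNIV" using sets_eq_imp_space_eq[OF sets_Q] by (simp add: space_PiM)
  have R_PI: "R \<in> ?PI \<rightarrow>\<^sub>M ?PI" unfolding R_def using measurable_index_shift[of "-1"] by simp
  have shift_PI: "seq_shift \<in> Q \<rightarrow>\<^sub>M ?PI"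
    using measurable_index_shift[of 1] by (simp add: seq_shift_def[abs_def] measurable_cong_sets[OF sets_Q refl])
  have R_shift: "R (seq_shift x) = x" "seq_shift (R x) = x" for x
    by (auto simp: R_def seq_shift_def)
  show "R \<in> Q \<rightarrow>\<^sub>M Q" using R_PI by (simp add: measurable_cong_sets[OF sets_Q sets_Q])
  have "distr Q Q R = distr (distr Q ?PI seq_shift) ?PI R"
    by (simp only: stat) (rule distr_cong; simp add: sets_Q)
  also have "\<dots> = distr Q ?PI (R \<circ> seq_shift)" by (rule distr_distr[OF R_PI shift_PI])
  also have "\<dots> = Q" using R_shift by (simp add: comp_def distr_id2[OF sets_Q[symmetric]])
  finally show "distr Q Q R = Q" .
  fix A assume A: "A \<in> sets Q" "R -` A \<inter> space Q = A"
  then have "R x \<in> A \<longleftrightarrow> x \<in> A" for x by (auto simp: space_Q)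
  then have "seq_shift x \<in> A \<longleftrightarrow> x \<in> A" for x using R_shift(1)[of x] by metis
  then have "seq_shift -` A \<inter> space Q = A" by (auto simp: space_Q)
  then show "measure Q A = 0 \<or> measure Q A = 1" by (rule erg[OF A(1)])
qed

lemma AE_eventually_service_sum_le:
  assumes Q: "stationary_ergodic_service Q"
    and mean: "\<And>i. integrable Q (\<lambda>\<eta>. \<eta> i) \<and> (\<integral>\<eta>. \<eta> i \<partial>Q) = 1"
    and b: "1 < b"
  shows "AE \<eta> in Q. \<forall>\<^sub>F k in sequentially. (\<Sum>j<k. max 0 (\<eta> (-1 - int j))) \<le> b * real k"
proof -
  interpret prob_space Q using Q by (simp add: stationary_ergodic_service_def)
  define R where "R = (\<lambda>\<eta> :: int \<Rightarrow> real. \<lambda>i. \<eta> (i - 1))"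
  define f where "f \<eta> = max 0 (\<eta> (-1 :: int))" for \<eta> :: "int \<Rightarrow> real"
  have pos: "AE \<eta> in Q. \<forall>i. 0 < \<eta> i" and sets_Q: "sets Q = sets (PiM UNIV (\<lambda>_::int. borel))"
    using Q by (auto simp: stationary_ergodic_service_def)
  have component: "(\<lambda>\<eta>. \<eta> (-1)) \<in> borel_measurable Q"
    by (simp add: measurable_cong_sets[OF sets_Q refl])
  have f: "f \<in> borel_measurable Q" unfolding f_def using component by measurable
  have "AE \<eta> in Q. f \<eta> = \<eta> (-1)" using pos by eventually_elim (auto simp: f_def less_imp_le)
  then have "integrable Q f" "integral\<^sup>L Q f = 1"
    using integrable_cong_AE[OF f component] integral_cong_AE[OF f component] mean by auto
  then have "AE \<eta> in Q. \<forall>\<^sub>F k in sequentially. birkhoff_sum R f k \<eta> \<le> b * real k"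
    using stationary_ergodic_service_backward_shift[OF Q] b unfolding R_def[symmetric]
    by (intro AE_eventually_birkhoff_sum_le) (auto simp: f_def)
  moreover have "birkhoff_sum R f k \<eta> = (\<Sum>j<k. max 0 (\<eta> (-1 - int j)))" for k \<eta>
    by (simp add: birkhoff_sum_def R_def funpow_backward_shift f_def)
  ultimately show ?thesis by simp
qed

section \<open>Shifted configurations\<close>

lemma AE_pair_measure_fst_snd:
  assumes A: "AE x in M. P x" and B: "AE y in N. Q y" and N: "sigma_finite_measure N"
  shows "AE w in M \<Otimes>\<^sub>M N. P (fst w) \<and> Q (snd w)"
proof -
  interpret sigma_finite_measure N by fact
  obtain N1 where N1: "N1 \<in> null_sets M" "{x\<in>space M. \<not> P x} \<subseteq> N1"
    using A by (auto simp: eventually_ae_filter)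
  obtain N2 where N2: "N2 \<in> null_sets N" "{y\<in>space N. \<not> Q y} \<subseteq> N2"
    using B by (auto simp: eventually_ae_filter)
  have "N1 \<times> space N \<union> space M \<times> N2 \<in> null_sets (M \<Otimes>\<^sub>M N)"
    using N1(1) N2(1) by (intro null_sets.Un times_in_null_sets1 times_in_null_sets2) auto
  moreover have "{w \<in> space (M \<Otimes>\<^sub>M N). \<not> (P (fst w) \<and> Q (snd w))} \<subseteq> N1 \<times> space N \<union> space M \<times> N2"
    using N1(2) N2(2) by (auto simp: space_pair_measure)
  ultimately show ?thesis by (rule AE_I')
qed

lemma eventually_sequentially_nat_diff:
  assumes "eventually P sequentially"
  shows "eventually (\<lambda>k. P (nat (int k - p))) sequentially"
proof -
  obtain N where "\<And>n. N \<le> n \<Longrightarrow> P n" using assms by (auto simp: eventually_sequentially)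
  then have "\<And>k. N + nat \<bar>p\<bar> \<le> k \<Longrightarrow> P (nat (int k - p))" by simp
  then show ?thesis by (auto simp: eventually_sequentially)
qed

lemma sum_shift_le:
  fixes \<eta> :: "int \<Rightarrow> real" and p :: int and k m :: nat
  assumes m: "int m = int k - p"
  shows "(\<Sum>i\<in>{- int k..-1}. \<eta> (i + p))
     \<le> (\<Sum>j<m. max 0 (\<eta> (-1 - int j))) + (\<Sum>l\<in>{0..\<bar>p\<bar>}. max 0 (\<eta> l))"
proof -
  have "(\<Sum>i\<in>{- int k..-1}. \<eta> (i + p)) \<le> (\<Sum>i\<in>{- int k..-1}. max 0 (\<eta> (i + p)))"
    by (intro sum_mono) auto
  also have "\<dots> = (\<Sum>l\<in>(\<lambda>i. i + p) ` {- int k..-1}. max 0 (\<eta> l))"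
    by (subst sum.reindex) (auto simp: inj_on_def)
  also have "\<dots> \<le> (\<Sum>l\<in>{- int m..-1} \<union> {0..\<bar>p\<bar>}. max 0 (\<eta> l))"
    by (intro sum_mono2) (use m in auto)
  also have "\<dots> = (\<Sum>l\<in>{- int m..-1}. max 0 (\<eta> l)) + (\<Sum>l\<in>{0..\<bar>p\<bar>}. max 0 (\<eta> l))"
    by (rule sum.union_disjoint) auto
  also have "(\<Sum>l\<in>{- int m..-1}. max 0 (\<eta> l)) = (\<Sum>j<m. max 0 (\<eta> (-1 - int j)))"
    by (rule sum.reindex_bij_witness[of _ "\<lambda>j. -1 - int j" "\<lambda>l. nat (-1 - l)"]) auto
  finally show ?thesis .
qed

text \<open>The bound holds for every relabelling shift \<open>p\<close>, so the index chosen by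
  \<^const>\<open>theta_conf\<close> plays no role.\<close>
lemma shifted_conf_in_Omega_tilde:
  fixes x \<eta> :: "int \<Rightarrow> real"
  assumes below: "\<And>C. \<forall>\<^sub>F m in sequentially. b * real m + C + x (- int m) < 0"
    and services: "\<forall>\<^sub>F k in sequentially. (\<Sum>j<k. max 0 (\<eta> (-1 - int j))) \<le> b * real k"
  shows "(\<lambda>j. x (j + p), \<lambda>j. \<eta> (j + p)) \<in> Omega_tilde"
proof -
  define C where "C = (\<Sum>l\<in>{0..\<bar>p\<bar>}. max 0 (\<eta> l))"
  have "\<forall>\<^sub>F m in sequentially. (\<Sum>j<m. max 0 (\<eta> (-1 - int j))) + C + x (- int m) < 0"
    using below[of C] services by eventually_elim linarith
  then have "\<forall>\<^sub>F k in sequentially.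
      (\<Sum>j<nat (int k - p). max 0 (\<eta> (-1 - int j))) + C + x (- int (nat (int k - p))) < 0"
    by (rule eventually_sequentially_nat_diff)
  moreover have "\<forall>\<^sub>F k in sequentially. p \<le> int k"
    using eventually_ge_at_top[of "nat p"] by (rule eventually_mono) linarith
  ultimately have "\<forall>\<^sub>F k in sequentially. (\<Sum>i\<in>{- int k..-1}. \<eta> (i + p)) + x (- int k + p) < 0"
  proof eventually_elim
    case (elim k)
    then have "int (nat (int k - p)) = int k - p" by simp
    from sum_shift_le[OF this, of \<eta>] elim show ?case unfolding C_def by simp
  qed
  then have "finite {k. \<not> ((\<Sum>i\<in>{- int k..-1}. \<eta> (i + p)) + x (- int k + p) < 0)}"
    by (simp only: eventually_cofinite[symmetric] cofinite_eq_sequentially)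
  then have "finite {k. 1 \<le> k \<and> \<not> ((\<Sum>i\<in>{- int k..-1}. \<eta> (i + p)) + x (- int k + p) < 0)}"
    by (rule finite_subset[rotated]) blast
  then show ?thesis unfolding Omega_tilde_def by simp
qed

lemma gt_one_factors_mult_less_one:
  fixes c :: real
  assumes c: "0 < c" "c < 1"
  obtains b r where "1 < b" "1 < r" "r * b * c < 1"
proof -
  have "1 < 1 / c" using c by simp
  then obtain b where b: "1 < b" "b < 1 / c" using dense by blast
  then have bc: "0 < b * c" "b * c < 1" using c by (auto simp: field_simps)
  then have "1 < 1 / (b * c)" by simp
  then obtain r where r: "1 < r" "r < 1 / (b * c)" using dense by blast
  then have "r * b * c < 1" using bc by (simp add: field_simps)
  with b r that show ?thesis by blast
qed

context arrival_rate
begin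

lemma eventually_theta_arrival_lt:
  fixes z :: "int \<Rightarrow> real"
  assumes r: "0 < r" and b: "0 < b" and rbc: "r * b * c < 1"
    and density: "\<forall>\<^sub>F T in at_top. - Lam lam (-T) \<le> c * T"
    and arrivals: "\<forall>\<^sub>F m in sequentially. real m / r - 3 \<le> - Lam lam (z (- int m))"
  shows "\<forall>\<^sub>F m in sequentially. b * real m + C + theta lam t (z (- int m)) < 0"
proof -
  have linear: "filterlim (\<lambda>m. e + d * real m) at_top sequentially" if "0 < d" for d e :: real
    by (rule filterlim_tendsto_add_at_top[OF tendsto_const
          filterlim_tendsto_pos_mult_at_top[OF tendsto_const that filterlim_real_sequentially]])
  have slope: "0 < 1 / r - c * b" using rbc r by (simp add: field_simps)
  have "\<forall>\<^sub>F m in sequentially. - Lam lam (- (C + b * real m)) \<le> c * (C + b * real m)"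
    using density linear[OF b] by (rule eventually_compose_filterlim)
  moreover have "\<forall>\<^sub>F m in sequentially. 3 + t + c * C < 0 + (1 / r - c * b) * real m"
    using linear[OF slope, of 0, unfolded filterlim_at_top_dense] by blast
  ultimately show ?thesis using arrivals
  proof eventually_elim
    case (elim m)
    have "(1 / r - c * b) * real m = real m / r - c * b * real m"
      and "c * (C + b * real m) = c * C + c * b * real m" by (simp_all add: algebra_simps)
    then have "Lam lam (theta lam t (z (- int m))) < Lam lam (- (C + b * real m))"
      using elim Lam_theta[of t "z (- int m)"] by linarith
    then have "theta lam t (z (- int m)) < - (C + b * real m)" by (metis Lam_le_iff not_le)
    then show ?case by linarith
  qed
qed

lemma theta_conf_in_Omega_tilde:
  fixes z \<eta> :: "int \<Rightarrow> real"
  assumes r: "1 < r" and b: "1 < b" and rbc: "r * b * c < 1"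
    and density: "\<forall>\<^sub>F T in at_top. - Lam lam (-T) \<le> c * T"
    and arrivals: "\<forall>\<^sub>F m in sequentially. real m / r - 3 \<le> - Lam lam (z (- int m))"
    and services: "\<forall>\<^sub>F k in sequentially. (\<Sum>j<k. max 0 (\<eta> (-1 - int j))) \<le> b * real k"
  shows "theta_conf lam t (z, \<eta>) \<in> Omega_tilde"
proof -
  have "\<forall>\<^sub>F m in sequentially. b * real m + C + theta lam t (z (- int m)) < 0" for C
    using r b rbc density arrivals by (intro eventually_theta_arrival_lt) auto
  then show ?thesis
    unfolding theta_conf_def Let_def
    using shifted_conf_in_Omega_tilde[of b "\<lambda>i. theta lam t (z i)" \<eta>] services by simp
qed

end

theorem lemma2:
  fixes lam :: "real \<Rightarrow> real"
    and P Q :: "(int \<Rightarrow> real) measure"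
  assumes lam_cont: "continuous_on UNIV lam"
    and lam_pos: "\<And>x. 0 < lam x"
    and lam_int_neg: "filterlim (\<lambda>T::real. LBINT x=ereal (-T)..0. lam x) at_top at_top"
    and lam_int_pos: "filterlim (\<lambda>T::real. LBINT x=0..ereal T. lam x) at_top at_top"
    and lam_density: "Limsup at_top (\<lambda>T::real. ereal ((1 / T) * (LBINT x=ereal (-T)..0. lam x))) < 1"
    and P: "poisson_process lam P"
    and Q: "stationary_ergodic_service Q"
    and mean: "\<And>i. integrable Q (\<lambda>\<eta>. \<eta> i) \<and> (\<integral>\<eta>. \<eta> i \<partial>Q) = 1"
  shows "AE \<omega> in (P \<Otimes>\<^sub>M Q). \<forall>t::real. theta_conf lam t \<omega> \<in> Omega_tilde"
proof -
  interpret arrival_rate lam using lam_cont lam_pos lam_int_neg lam_int_pos by unfold_locales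
  obtain c where c: "0 < c" "c < 1" and density: "\<forall>\<^sub>F T in at_top. - Lam lam (-T) \<le> c * T"
    using eventually_neg_Lam_le[OF lam_density] by blast
  obtain b r where b: "1 < b" and r: "1 < r" and rbc: "r * b * c < 1"
    using gt_one_factors_mult_less_one[OF c] by blast
  have "AE z in P. \<forall>\<^sub>F m in sequentially. real m / r - 3 \<le> - Lam lam (z (- int m))"
    by (rule AE_eventually_Lam_arrival_ge[OF P r])
  moreover have "AE \<eta> in Q. \<forall>\<^sub>F k in sequentially. (\<Sum>j<k. max 0 (\<eta> (-1 - int j))) \<le> b * real k"
    by (rule AE_eventually_service_sum_le[OF Q mean b])
  moreover have "sigma_finite_measure Q"
    using Q by (intro prob_space_imp_sigma_finite) (simp add: stationary_ergodic_service_def)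
  ultimately show ?thesis
    by (rule AE_pair_measure_fst_snd[THEN AE_mp])
       (auto intro!: theta_conf_in_Omega_tilde[OF r b rbc density])
qed

end
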